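(* Let $r$ be a prime power and let $f\in\mathbb{F}_r[t_1,t_2]$ be a non-constant polynomial of degree at most $2$. Then the map $\mathbb{F}_r^2\to\mathbb{F}_r$ induced by $f$ takes at least $\lceil r/2\rceil$ distinct values. *)

theory Defs
  imports Complex_Main "HOL-Library.Cardinality"
begin

definition quad2_eval :: "'a::field \<Rightarrow> 'a \<Rightarrow> 'a \<Rightarrow> 'a \<Rightarrow> 'a \<Rightarrow> 'a \<Rightarrow> 'a \<times> 'a \<Rightarrow> 'a" where
  "quad2_eval c20 c11 c02 c10 c01 c00 = (\<lambda>(x, y).
     c20 * x^2 + c11 * x * y + c02 * y^2 + c10 * x + c01 * y + c00)"

end

theory Submission
  imports Defs
begin

text \<open>Restricted to a suitable line, f becomes a non-constant polynomial of degree at most 2 in one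
  variable: along y = 0 or x = 0 unless f = c11 x y + c00, and then along y = 1. Such a polynomial
  takes each value at most twice, since p(x) = p(y) forces x = y or x + y = -B/A, so already on
  the line f takes at least r/2 values.\<close>

lemma quadratic_eq_quadratic_imp:
  fixes A B C x y :: "'a::field"
  assumes nonconst: "A \<noteq> 0 \<or> B \<noteq> 0" and eq: "A*x^2 + B*x + C = A*y^2 + B*y + C"
  shows "y = x \<or> y = (if A = 0 then x else -B/A - x)"
proof -
  have "(x - y) * (A*(x + y) + B) = (A*x^2 + B*x + C) - (A*y^2 + B*y + C)"
    by (simp add: algebra_simps power2_eq_square)
  with eq have "x = y \<or> A*(x + y) + B = 0" by simp
  then show ?thesis
  proof
    assume sum: "A*(x + y) + B = 0"
    show ?thesis
    proof (cases "A = 0")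
      case True
      with sum nonconst show ?thesis by simp
    next
      case False
      from sum have "A*(x + y) = -B" by (simp add: eq_neg_iff_add_eq_0)
      with False have "y = -B/A - x" by (simp add: field_simps)
      with False show ?thesis by simp
    qed
  qed auto
qed

lemma card_UNIV_le_twice_card_range:
  fixes h :: "'a::finite \<Rightarrow> 'b" and \<sigma> :: "'a \<Rightarrow> 'a"
  assumes fibre: "\<And>x y. h x = h y \<Longrightarrow> y = x \<or> y = \<sigma> x"
  shows "CARD('a) \<le> 2 * card (range h)"
proof -
  let ?k = "inv h"
  have "UNIV \<subseteq> ?k ` range h \<union> (\<sigma> \<circ> ?k) ` range h"
  proof
    fix x :: 'a
    have "h (?k (h x)) = h x" by (simp add: f_inv_into_f)
    then have "x = ?k (h x) \<or> x = \<sigma> (?k (h x))" using fibre by metis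
    then show "x \<in> ?k ` range h \<union> (\<sigma> \<circ> ?k) ` range h" by auto
  qed
  then have "CARD('a) \<le> card (?k ` range h \<union> (\<sigma> \<circ> ?k) ` range h)"
    by (simp add: card_mono)
  also have "\<dots> \<le> card (?k ` range h) + card ((\<sigma> \<circ> ?k) ` range h)"
    by (rule card_Un_le)
  also have "\<dots> \<le> card (range h) + card (range h)"
    by (intro add_mono card_image_le) auto
  finally show ?thesis by simp
qed

lemma card_UNIV_le_twice_card_range_quadratic:
  fixes A B C :: "'a::{field,finite}"
  assumes "A \<noteq> 0 \<or> B \<noteq> 0"
  shows "CARD('a) \<le> 2 * card (range (\<lambda>x. A*x^2 + B*x + C))"
  by (rule card_UNIV_le_twice_card_range[where \<sigma>="\<lambda>x. if A = 0 then x else -B/A - x"])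
    (use quadratic_eq_quadratic_imp[OF assms] in blast)

lemma nat_ceiling_half_le:
  assumes "n \<le> 2 * m"
  shows "nat \<lceil>real n / 2\<rceil> \<le> m"
proof -
  have "real n / 2 \<le> real m" using assms by linarith
  then show ?thesis by (simp add: ceiling_le_iff nat_le_iff)
qed

lemma quad2_eval_horizontal_line:
  "quad2_eval c20 c11 c02 c10 c01 c00 (x, y) =
     c20 * x^2 + (c11*y + c10) * x + (c02*y^2 + c01*y + c00)"
  by (simp add: quad2_eval_def algebra_simps)

lemma quad2_eval_vertical_axis:
  "quad2_eval c20 c11 c02 c10 c01 c00 (0, y) = c02 * y^2 + c01 * y + c00"
  by (simp add: quad2_eval_def)

lemma nonconstant_quad2_eval_restricts_to_quadratic:
  fixes c20 c11 c02 c10 c01 c00 :: "'a::field"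
  assumes "c20 \<noteq> 0 \<or> c11 \<noteq> 0 \<or> c02 \<noteq> 0 \<or> c10 \<noteq> 0 \<or> c01 \<noteq> 0"
  obtains A B C where "A \<noteq> 0 \<or> B \<noteq> 0"
    and "range (\<lambda>x. A*x^2 + B*x + C) \<subseteq> range (quad2_eval c20 c11 c02 c10 c01 c00)"
proof -
  let ?f = "quad2_eval c20 c11 c02 c10 c01 c00"
  consider "c20 \<noteq> 0 \<or> c10 \<noteq> 0" | "c02 \<noteq> 0 \<or> c01 \<noteq> 0"
    | "c20 = 0" "c10 = 0" "c11 \<noteq> 0"
    using assms by blast
  then show ?thesis
  proof cases
    case 1
    have restr: "(\<lambda>x. c20*x^2 + c10*x + c00) = (\<lambda>x. ?f (x, 0))"
      by (simp add: quad2_eval_horizontal_line)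
    have "range (\<lambda>x. c20*x^2 + c10*x + c00) \<subseteq> range ?f"
      unfolding restr by blast
    with 1 show ?thesis by (rule that)
  next
    case 2
    have restr: "(\<lambda>y. c02*y^2 + c01*y + c00) = (\<lambda>y. ?f (0, y))"
      by (simp add: quad2_eval_vertical_axis)
    have "range (\<lambda>y. c02*y^2 + c01*y + c00) \<subseteq> range ?f"
      unfolding restr by blast
    with 2 show ?thesis by (rule that)
  next
    case 3
    have restr: "(\<lambda>x. c20*x^2 + (c11 + c10)*x + (c02 + c01 + c00)) = (\<lambda>x. ?f (x, 1))"
      by (simp add: quad2_eval_horizontal_line)
    have "range (\<lambda>x. c20*x^2 + (c11 + c10)*x + (c02 + c01 + c00)) \<subseteq> range ?f"
      unfolding restr by blast
    moreover have "c20 \<noteq> 0 \<or> c11 + c10 \<noteq> 0" using 3 by simp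
    ultimately show ?thesis using that by blast
  qed
qed

theorem lemma5:
  fixes c20 c11 c02 c10 c01 c00 :: "'a::{field, finite}"
  assumes nonconst: "c20 \<noteq> 0 \<or> c11 \<noteq> 0 \<or> c02 \<noteq> 0 \<or> c10 \<noteq> 0 \<or> c01 \<noteq> 0"
  shows "card (range (quad2_eval c20 c11 c02 c10 c01 c00))
           \<ge> nat \<lceil>real CARD('a) / 2\<rceil>"
proof -
  obtain A B C where AB: "A \<noteq> 0 \<or> B \<noteq> 0"
    and line: "range (\<lambda>x. A*x^2 + B*x + C) \<subseteq> range (quad2_eval c20 c11 c02 c10 c01 c00)"
    using nonconstant_quad2_eval_restricts_to_quadratic[OF nonconst] .
  have "CARD('a) \<le> 2 * card (range (\<lambda>x. A*x^2 + B*x + C))"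
    using AB by (rule card_UNIV_le_twice_card_range_quadratic)
  also have "\<dots> \<le> 2 * card (range (quad2_eval c20 c11 c02 c10 c01 c00))"
    using line by (simp add: card_mono)
  finally show ?thesis by (rule nat_ceiling_half_le)
qed

end
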